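(* Let $p$ be an odd prime, $\omega=e^{2\pi i/p}$, $m\ge1$, $Q=T_{(p^m)}$ and $K=K_Q(p)$. Every maximal $p$-torsion abelian subgroup of $K$ is either the subgroup $T_{(p)}$ or a subgroup of the form $\langle\omega\mathbbm{1},S_\xi X\rangle$ with $S_\xi\in Q$. Any two distinct maximal $p$-torsion abelian subgroups of $K$ intersect in the center $Z(K)=\langle\omega\mathbbm{1}\rangle$.
   Context: Let $\{|q\rangle:q\in\mathbb{Z}_p\}$ be the computational basis of $\mathbb{C}^p$ and $X|q\rangle=|q+1\rangle$. For $\xi:\mathbb{Z}_p\to U(1)$ let $S_\xi=\mathrm{diag}(\xi(0),\dots,\xi(p-1))$. $T=\{S_\xi:\prod_{q}\xi(q)=1\}$ and $T_{(p^k)}=\{S\in T:S^{p^k}=\mathbbm{1}\}$. $K_Q(p)$ is the subgroup of $SU(p)$ generated by all $S_\xi X^b$ with $S_\xi\in Q$, $b\in\mathbb{Z}_p$. A subgroup is $p$-torsion abelian if it is abelian and every element $M$ in it satisfies $M^p=\mathbbm{1}$; maximal refers to inclusion among such subgroups. *)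

theory Defs
  imports Complex_Main "Jordan_Normal_Form.Matrix"
begin

text \<open>p x p complex matrices; the computational basis |q>, q in Z_p, is indexed by 0..p-1.\<close>

definition Xmat :: "nat \<Rightarrow> complex mat" where
  "Xmat p = mat p p (\<lambda>(i,j). if i = (j + 1) mod p then 1 else 0)"

definition Smat :: "nat \<Rightarrow> (nat \<Rightarrow> complex) \<Rightarrow> complex mat" where
  "Smat p \<xi> = mat p p (\<lambda>(i,j). if i = j then \<xi> i else 0)"

definition Ttorus :: "nat \<Rightarrow> complex mat set" where
  "Ttorus p = {Smat p \<xi> | \<xi>. (\<forall>q<p. cmod (\<xi> q) = 1) \<and> (\<Prod>q<p. \<xi> q) = 1}"

definition Ttors :: "nat \<Rightarrow> nat \<Rightarrow> complex mat set" where
  "Ttors p N = {S \<in> Ttorus p. S ^\<^sub>m N = 1\<^sub>m p}"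

definition is_subgrp :: "nat \<Rightarrow> complex mat set \<Rightarrow> bool" where
  "is_subgrp p H \<longleftrightarrow> H \<subseteq> carrier_mat p p \<and> 1\<^sub>m p \<in> H \<and>
     (\<forall>x\<in>H. \<forall>y\<in>H. x * y \<in> H) \<and> (\<forall>x\<in>H. \<exists>y\<in>H. x * y = 1\<^sub>m p \<and> y * x = 1\<^sub>m p)"

definition gen_grp :: "nat \<Rightarrow> complex mat set \<Rightarrow> complex mat set" where
  "gen_grp p A = \<Inter>{H. is_subgrp p H \<and> A \<subseteq> H}"

definition KQ :: "nat \<Rightarrow> complex mat set \<Rightarrow> complex mat set" where
  "KQ p Q = gen_grp p {S * (Xmat p ^\<^sub>m b) | S b. S \<in> Q \<and> b < p}"

definition ptors_abelian_sub :: "nat \<Rightarrow> complex mat set \<Rightarrow> complex mat set \<Rightarrow> bool" where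
  "ptors_abelian_sub p G H \<longleftrightarrow> is_subgrp p H \<and> H \<subseteq> G \<and>
     (\<forall>x\<in>H. \<forall>y\<in>H. x * y = y * x) \<and> (\<forall>M\<in>H. M ^\<^sub>m p = 1\<^sub>m p)"

definition max_ptors_abelian_sub :: "nat \<Rightarrow> complex mat set \<Rightarrow> complex mat set \<Rightarrow> bool" where
  "max_ptors_abelian_sub p G H \<longleftrightarrow> ptors_abelian_sub p G H \<and>
     (\<forall>H'. ptors_abelian_sub p G H' \<and> H \<subseteq> H' \<longrightarrow> H' = H)"

definition center_grp :: "complex mat set \<Rightarrow> complex mat set" where
  "center_grp G = {z \<in> G. \<forall>g\<in>G. z * g = g * z}"

end

theory Submission
  imports Defs
begin

text \<open>
  Every element of \<open>K\<close> is a monomial matrix \<open>S\<^sub>\<xi> X\<^sup>b\<close>, and these multiply by an explicit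
  rule. A central element commutes with \<open>diag(\<omega>, \<omega>\<^sup>-\<^sup>1, 1, \<dots>, 1)\<close>, which forces \<open>b = 0\<close>,
  and with \<open>X\<close>, which makes its diagonal constant; so the centre consists of the scalars \<open>\<omega>\<^sup>j\<close>.
  A maximal \<open>p\<close>-torsion abelian subgroup \<open>H\<close> consisting of diagonal matrices lies in
  \<open>T\<^sub>(\<^sub>p\<^sub>)\<close> and equals it by maximality. Otherwise, \<open>p\<close> being prime, some power of a
  non-diagonal element of \<open>H\<close> has the form \<open>Y = S\<^sub>\<tau> X\<close>. For \<open>A = S\<^sub>\<eta> X\<^sup>d \<in> H\<close> the product
  \<open>A Y\<^sup>p\<^sup>-\<^sup>d\<close> is diagonal and commutes with \<open>Y\<close>, hence is a scalar; so \<open>H \<subseteq> \<langle>\<omega>\<one>, Y\<rangle>\<close>,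
  which is itself \<open>p\<close>-torsion abelian, and maximality gives equality. Thus a non-diagonal
  element determines the maximal subgroup containing it, and a diagonal element of a
  non-diagonal maximal subgroup is a scalar; this gives the intersection property.
\<close>

section \<open>Residues modulo \<open>p\<close>\<close>

lemma mod_add_eq_iff:
  "i < p \<Longrightarrow> k < p \<Longrightarrow> b < (p :: nat) \<Longrightarrow> i = (k + b) mod p \<longleftrightarrow> k = (i + p - b) mod p"
  by (auto simp: mod_if)

lemma prod_mod_shift: "(\<Prod>i<p. f ((i + a) mod p)) = (\<Prod>i<(p :: nat). f i)"
proof (cases "p = 0")
  case False
  define b where "b = a mod p"
  have b: "b < p"
    using False by (simp add: b_def)
  have "(\<Prod>i<p. f ((i + a) mod p)) = (\<Prod>i<p. f ((i + b) mod p))"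
    by (simp add: b_def mod_add_right_eq)
  also have "\<dots> = (\<Prod>i<(p :: nat). f i)"
  proof (rule prod.reindex_bij_witness[where i = "\<lambda>k. (k + p - b) mod p" and j = "\<lambda>i. (i + b) mod p"])
    show "((k + p - b) mod p + b) mod p = k" if "k \<in> {..<p}" for k
      using that b mod_add_eq_iff[of k p "(k + p - b) mod p" b] by simp
    show "((i + b) mod p + p - b) mod p = i" if "i \<in> {..<p}" for i
      using that b mod_add_eq_iff[of "(i + b) mod p" p i b] by simp
  qed (use b in auto)
  finally show ?thesis .
qed simp

lemma exists_mod_inverse:
  assumes "prime (p :: nat)" "0 < c" "c < p"
  shows "\<exists>k. k * c mod p = 1"
proof -
  have "coprime c p"
    using assms by (metis coprime_commute dvd_imp_le not_le prime_imp_coprime)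
  then obtain x y where "c * x = p * y + 1"
    using bezout_nat[of c p] assms(2) by auto
  then have "x * c mod p = 1"
    using assms(2,3) by (simp add: Suc_times_mod_eq mult.commute)
  then show ?thesis ..
qed

section \<open>Matrix powers and generated groups\<close>

lemma pow_mat_add:
  assumes A: "(A :: 'a :: semiring_1 mat) \<in> carrier_mat n n"
  shows "A ^\<^sub>m (a + b) = A ^\<^sub>m a * A ^\<^sub>m b"
  by (induction b) (use A in \<open>auto simp: assoc_mult_mat[of _ n n _ n _ n]\<close>)

lemma pow_mat_mult:
  assumes A: "(A :: 'a :: semiring_1 mat) \<in> carrier_mat n n"
  shows "A ^\<^sub>m (a * b) = (A ^\<^sub>m a) ^\<^sub>m b"
  by (induction b) (use A in \<open>auto simp: pow_mat_add add.commute[of a]\<close>)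

lemma pow_mat_commute:
  assumes A: "(A :: 'a :: semiring_1 mat) \<in> carrier_mat n n" and B: "B \<in> carrier_mat n n"
    and AB: "A * B = B * A"
  shows "A ^\<^sub>m k * B = B * A ^\<^sub>m k"
proof (induction k)
  case (Suc k)
  have "A ^\<^sub>m Suc k * B = A ^\<^sub>m k * (A * B)"
    using A B by (simp add: assoc_mult_mat[of _ n n _ n _ n])
  also have "\<dots> = (A ^\<^sub>m k * B) * A"
    unfolding AB using A B by (simp add: assoc_mult_mat[of _ n n _ n _ n])
  finally show ?case
    unfolding Suc using A B by (simp add: assoc_mult_mat[of _ n n _ n _ n])
qed (use A B in simp)

lemma pow_mat_mult_distrib:
  assumes A: "(A :: 'a :: semiring_1 mat) \<in> carrier_mat n n" and B: "B \<in> carrier_mat n n"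
    and AB: "A * B = B * A"
  shows "(A * B) ^\<^sub>m k = A ^\<^sub>m k * B ^\<^sub>m k"
proof (induction k)
  case (Suc k)
  have "(A * B) ^\<^sub>m Suc k = A ^\<^sub>m k * (B ^\<^sub>m k * A) * B"
    unfolding pow_mat.simps Suc
    using A B by (simp add: assoc_mult_mat[of _ n n _ n _ n] mult_carrier_mat[of _ n n _ n])
  also have "\<dots> = A ^\<^sub>m Suc k * B ^\<^sub>m Suc k"
    unfolding pow_mat_commute[OF B A AB[symmetric]]
    using A B by (simp add: assoc_mult_mat[of _ n n _ n _ n] mult_carrier_mat[of _ n n _ n])
  finally show ?case .
qed (use A B in simp)

lemma one_pow_mat: "1\<^sub>m n ^\<^sub>m k = (1\<^sub>m n :: 'a :: semiring_1 mat)"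
  by (induction k) auto

lemma pow_mat_mult_eq_one:
  assumes "(A :: 'a :: semiring_1 mat) \<in> carrier_mat n n" "A ^\<^sub>m m = 1\<^sub>m n"
  shows "A ^\<^sub>m (m * k) = 1\<^sub>m n"
  using assms by (simp add: pow_mat_mult one_pow_mat)

lemma smult_one_mat_commute:
  assumes "(A :: 'a :: comm_semiring_1 mat) \<in> carrier_mat n n"
  shows "(a \<cdot>\<^sub>m 1\<^sub>m n) * A = A * (a \<cdot>\<^sub>m 1\<^sub>m n)"
  using assms by (simp add: mult_smult_assoc_mat[of _ n n] mult_smult_distrib[of A n n "1\<^sub>m n" n])

lemma subgrp_pow_closed: "is_subgrp n H \<Longrightarrow> A \<in> H \<Longrightarrow> A ^\<^sub>m k \<in> H"
  by (induction k) (auto simp: is_subgrp_def subsetD)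

lemma gen_grp_eqI:
  assumes "is_subgrp n W" "A \<subseteq> W" "\<And>H. is_subgrp n H \<Longrightarrow> A \<subseteq> H \<Longrightarrow> W \<subseteq> H"
  shows "gen_grp n A = W"
  using assms unfolding gen_grp_def by blast

lemma gen_grp_subgrp: "is_subgrp n A \<Longrightarrow> gen_grp n A = A"
  by (rule gen_grp_eqI) auto

lemma gen_grp_insert_one: "gen_grp n (insert (1\<^sub>m n) A) = gen_grp n A"
proof -
  have "{H. is_subgrp n H \<and> insert (1\<^sub>m n) A \<subseteq> H} = {H. is_subgrp n H \<and> A \<subseteq> H}"
    by (auto simp: is_subgrp_def)
  then show ?thesis
    by (simp add: gen_grp_def)
qed

definition pair_powers :: "'a :: semiring_1 mat \<Rightarrow> 'a mat \<Rightarrow> 'a mat set" where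
  "pair_powers Z Y = {Z ^\<^sub>m j * Y ^\<^sub>m k | j k. True}"

locale commuting_pair =
  fixes n :: nat and Z Y :: "complex mat"
  assumes Z: "Z \<in> carrier_mat n n" and Y: "Y \<in> carrier_mat n n"
    and commute: "Z * Y = Y * Z"
    and Z_pow: "Z ^\<^sub>m n = 1\<^sub>m n" and Y_pow: "Y ^\<^sub>m n = 1\<^sub>m n"
    and n_pos: "0 < n"
begin

lemma pair_powers_mult:
  "(Z ^\<^sub>m i * Y ^\<^sub>m a) * (Z ^\<^sub>m j * Y ^\<^sub>m b) = Z ^\<^sub>m (i + j) * Y ^\<^sub>m (a + b)"
proof -
  have swap: "Y ^\<^sub>m a * Z ^\<^sub>m j = Z ^\<^sub>m j * Y ^\<^sub>m a"
    using pow_mat_commute[OF Y pow_carrier_mat[OF Z] pow_mat_commute[OF Z Y commute, symmetric]] .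
  have "(Z ^\<^sub>m i * Y ^\<^sub>m a) * (Z ^\<^sub>m j * Y ^\<^sub>m b) = Z ^\<^sub>m i * (Y ^\<^sub>m a * Z ^\<^sub>m j) * Y ^\<^sub>m b"
    using Z Y by (simp add: assoc_mult_mat[of _ n n _ n _ n] mult_carrier_mat[of _ n n _ n])
  also have "\<dots> = (Z ^\<^sub>m i * Z ^\<^sub>m j) * (Y ^\<^sub>m a * Y ^\<^sub>m b)"
    unfolding swap using Z Y by (simp add: assoc_mult_mat[of _ n n _ n _ n] mult_carrier_mat[of _ n n _ n])
  finally show ?thesis
    by (simp only: pow_mat_add[OF Z, symmetric] pow_mat_add[OF Y, symmetric])
qed

lemma pair_powers_carrier: "pair_powers Z Y \<subseteq> carrier_mat n n"
  using Z Y by (auto simp: pair_powers_def)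

lemma pair_powers_subgrp: "is_subgrp n (pair_powers Z Y)"
  unfolding is_subgrp_def
proof (intro conjI ballI pair_powers_carrier)
  have "1\<^sub>m n = Z ^\<^sub>m 0 * Y ^\<^sub>m 0"
    using Z Y by simp
  then show "1\<^sub>m n \<in> pair_powers Z Y"
    unfolding pair_powers_def by blast
next
  fix U V assume "U \<in> pair_powers Z Y" "V \<in> pair_powers Z Y"
  then show "U * V \<in> pair_powers Z Y"
    unfolding pair_powers_def by (force simp: pair_powers_mult)
next
  fix U assume "U \<in> pair_powers Z Y"
  then obtain j k where U: "U = Z ^\<^sub>m j * Y ^\<^sub>m k"
    unfolding pair_powers_def by blast
  define V where "V = Z ^\<^sub>m (j * (n - 1)) * Y ^\<^sub>m (k * (n - 1))"
  have "j + j * (n - 1) = n * j" "k + k * (n - 1) = n * k"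
    using n_pos by (simp_all add: algebra_simps)
  then have "U * V = 1\<^sub>m n" "V * U = 1\<^sub>m n"
    using Z Y by (simp_all add: U V_def pair_powers_mult add.commute pow_mat_mult_eq_one Z_pow Y_pow)
  moreover have "V \<in> pair_powers Z Y"
    unfolding V_def pair_powers_def by blast
  ultimately show "\<exists>V \<in> pair_powers Z Y. U * V = 1\<^sub>m n \<and> V * U = 1\<^sub>m n"
    by blast
qed

lemma pair_powers_commute: "U \<in> pair_powers Z Y \<Longrightarrow> V \<in> pair_powers Z Y \<Longrightarrow> U * V = V * U"
  unfolding pair_powers_def by (auto simp: pair_powers_mult add.commute)

lemma pair_powers_torsion:
  assumes "U \<in> pair_powers Z Y" shows "U ^\<^sub>m n = 1\<^sub>m n"
proof -
  obtain j k where U: "U = Z ^\<^sub>m j * Y ^\<^sub>m k"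
    using assms unfolding pair_powers_def by blast
  have "Z ^\<^sub>m j * Y ^\<^sub>m k = Y ^\<^sub>m k * Z ^\<^sub>m j"
    using pair_powers_mult[of j 0 0 k] pair_powers_mult[of 0 k j 0] Z Y by simp
  then have "U ^\<^sub>m n = (Z ^\<^sub>m j) ^\<^sub>m n * (Y ^\<^sub>m k) ^\<^sub>m n"
    unfolding U by (rule pow_mat_mult_distrib[OF pow_carrier_mat[OF Z] pow_carrier_mat[OF Y]])
  also have "\<dots> = 1\<^sub>m n"
    using Z Y Z_pow Y_pow by (simp add: pow_mat_mult_eq_one flip: pow_mat_mult mult.commute[of n])
  finally show ?thesis .
qed

lemma gen_grp_pair: "gen_grp n {Z, Y} = pair_powers Z Y"
proof (rule gen_grp_eqI[OF pair_powers_subgrp])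
  have "Z = Z ^\<^sub>m 1 * Y ^\<^sub>m 0" "Y = Z ^\<^sub>m 0 * Y ^\<^sub>m 1"
    using Z Y by simp_all
  then show "{Z, Y} \<subseteq> pair_powers Z Y"
    unfolding pair_powers_def by blast
next
  fix H assume H: "is_subgrp n H" "{Z, Y} \<subseteq> H"
  then show "pair_powers Z Y \<subseteq> H"
    unfolding pair_powers_def using subgrp_pow_closed[OF H(1)]
    by (auto simp: is_subgrp_def)
qed

end

section \<open>Monomial matrices\<close>

text \<open>\<open>monomial_mat p \<xi> b\<close> is \<open>S\<^sub>\<xi> X\<^sup>b\<close> in the notation of the paper.\<close>

definition monomial_mat :: "nat \<Rightarrow> (nat \<Rightarrow> 'a :: zero) \<Rightarrow> nat \<Rightarrow> 'a mat" where
  "monomial_mat p \<xi> b = mat p p (\<lambda>(i, j). if i = (j + b) mod p then \<xi> i else 0)"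

lemma monomial_mat_carrier [simp]: "monomial_mat p \<xi> b \<in> carrier_mat p p"
  and monomial_mat_dim [simp]: "dim_row (monomial_mat p \<xi> b) = p" "dim_col (monomial_mat p \<xi> b) = p"
  by (simp_all add: monomial_mat_def)

lemma monomial_mat_index [simp]:
  "i < p \<Longrightarrow> j < p \<Longrightarrow> monomial_mat p \<xi> b $$ (i, j) = (if i = (j + b) mod p then \<xi> i else 0)"
  by (simp add: monomial_mat_def)

lemma monomial_mat_cong:
  "(\<And>i. i < p \<Longrightarrow> \<xi> i = \<eta> i) \<Longrightarrow> b = c \<Longrightarrow> monomial_mat p \<xi> b = monomial_mat p \<eta> c"
  by (rule eq_matI) auto

lemma monomial_mat_eqD:
  assumes "monomial_mat p \<xi> b = monomial_mat p \<eta> b" "b < p" "i < p"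
  shows "\<xi> i = \<eta> i"
proof -
  define j where "j = (i + p - b) mod p"
  have "j < p" "i = (j + b) mod p"
    using assms(2,3) mod_add_eq_iff[of i p j b] by (simp_all add: j_def)
  then show ?thesis
    using arg_cong[OF assms(1), of "\<lambda>M. M $$ (i, j)"] assms(3) by simp
qed

lemma monomial_mat_mult:
  assumes "b < p" "c < p"
  shows "monomial_mat p \<xi> b * monomial_mat p \<eta> c
    = monomial_mat p (\<lambda>i. \<xi> i * \<eta> ((i + p - b) mod p)) ((b + c) mod p)"
proof (rule eq_matI)
  fix i k assume "i < dim_row (monomial_mat p (\<lambda>i. \<xi> i * \<eta> ((i + p - b) mod p)) ((b + c) mod p))"
    "k < dim_col (monomial_mat p (\<lambda>i. \<xi> i * \<eta> ((i + p - b) mod p)) ((b + c) mod p))"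
  then have i: "i < p" and k: "k < p"
    by simp_all
  have "(monomial_mat p \<xi> b * monomial_mat p \<eta> c) $$ (i, k)
      = (\<Sum>j\<in>{0..<p}. monomial_mat p \<xi> b $$ (i, j) * monomial_mat p \<eta> c $$ (j, k))"
    using i k by (simp add: scalar_prod_def)
  also have "\<dots> = (\<Sum>j\<in>{0..<p}. if j = (k + c) mod p
      then (if i = (j + b) mod p then \<xi> i else 0) * \<eta> j else 0)"
    using i k by (intro sum.cong) auto
  also have "\<dots> = (if i = ((k + c) mod p + b) mod p then \<xi> i else 0) * \<eta> ((k + c) mod p)"
    using k by (simp add: sum.delta')
  also have "\<dots> = monomial_mat p (\<lambda>i. \<xi> i * \<eta> ((i + p - b) mod p)) ((b + c) mod p) $$ (i, k)"
  proof -
    have "((k + c) mod p + b) mod p = (k + (b + c) mod p) mod p"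
      by (metis add.assoc add.commute mod_add_left_eq mod_add_right_eq)
    then show ?thesis
      using i k assms mod_add_eq_iff[of i p "(k + c) mod p" b] by auto
  qed
  finally show "(monomial_mat p \<xi> b * monomial_mat p \<eta> c) $$ (i, k)
      = monomial_mat p (\<lambda>i. \<xi> i * \<eta> ((i + p - b) mod p)) ((b + c) mod p) $$ (i, k)" .
qed auto

lemma monomial_mat_diag_mult:
  fixes \<xi> \<eta> :: "nat \<Rightarrow> 'a :: comm_semiring_1"
  shows "0 < p \<Longrightarrow> monomial_mat p \<xi> 0 * monomial_mat p \<eta> 0 = monomial_mat p (\<lambda>i. \<xi> i * \<eta> i) 0"
  by (simp add: monomial_mat_mult cong: monomial_mat_cong)

lemma Smat_eq_monomial_mat: "Smat p \<xi> = monomial_mat p \<xi> 0"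
  by (rule eq_matI) (auto simp: Smat_def)

lemma one_mat_eq_monomial_mat: "1\<^sub>m p = monomial_mat p (\<lambda>_. 1) 0"
  by (rule eq_matI) auto

lemma smult_one_mat_eq_monomial_mat: "(a :: 'a :: semiring_1) \<cdot>\<^sub>m 1\<^sub>m p = monomial_mat p (\<lambda>_. a) 0"
  by (rule eq_matI) auto

lemma Xmat_eq_monomial_mat: "1 < p \<Longrightarrow> Xmat p = monomial_mat p (\<lambda>_. 1) 1"
  by (rule eq_matI) (auto simp: Xmat_def)

lemma Xmat_pow: "1 < p \<Longrightarrow> Xmat p ^\<^sub>m b = monomial_mat p (\<lambda>_. 1) (b mod p)"
  by (induction b) (simp_all add: one_mat_eq_monomial_mat Xmat_eq_monomial_mat monomial_mat_mult mod_Suc_eq)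

lemma monomial_mat_diag_pow:
  fixes \<xi> :: "nat \<Rightarrow> 'a :: comm_semiring_1"
  shows "0 < p \<Longrightarrow> monomial_mat p \<xi> 0 ^\<^sub>m n = monomial_mat p (\<lambda>i. \<xi> i ^ n) 0"
  by (induction n) (simp_all add: one_mat_eq_monomial_mat monomial_mat_diag_mult mult.commute)

lemma monomial_mat_diag_pow_eq_one_iff:
  fixes \<xi> :: "nat \<Rightarrow> 'a :: comm_semiring_1"
  assumes "0 < p"
  shows "monomial_mat p \<xi> 0 ^\<^sub>m n = 1\<^sub>m p \<longleftrightarrow> (\<forall>i<p. \<xi> i ^ n = 1)"
  using monomial_mat_eqD[of p _ 0] assms
  by (auto simp: monomial_mat_diag_pow one_mat_eq_monomial_mat intro: monomial_mat_cong)

lemma monomial_mat_commute_diag: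
  fixes \<eta> \<delta> :: "nat \<Rightarrow> 'a :: field"
  assumes c: "c < p" and "\<eta> c \<noteq> 0"
    and commute: "monomial_mat p \<eta> c * monomial_mat p \<delta> 0 = monomial_mat p \<delta> 0 * monomial_mat p \<eta> c"
  shows "\<delta> c = \<delta> 0"
proof -
  have "monomial_mat p (\<lambda>i. \<eta> i * \<delta> ((i + p - c) mod p)) c = monomial_mat p (\<lambda>i. \<delta> i * \<eta> i) c"
    using commute c by (simp add: monomial_mat_mult cong: monomial_mat_cong)
  from monomial_mat_eqD[OF this c c] show ?thesis
    using \<open>\<eta> c \<noteq> 0\<close> by simp
qed

lemma monomial_mat_diag_commute_cycle:
  fixes \<eta> \<tau> :: "nat \<Rightarrow> 'a :: field"
  assumes p: "1 < p" and \<tau>: "\<And>i. i < p \<Longrightarrow> \<tau> i \<noteq> 0"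
    and commute: "monomial_mat p \<eta> 0 * monomial_mat p \<tau> 1 = monomial_mat p \<tau> 1 * monomial_mat p \<eta> 0"
    and i: "i < p"
  shows "\<eta> i = \<eta> 0"
proof -
  have eq: "monomial_mat p (\<lambda>i. \<eta> i * \<tau> i) 1 = monomial_mat p (\<lambda>i. \<tau> i * \<eta> ((i + p - 1) mod p)) 1"
    using commute p by (simp add: monomial_mat_mult cong: monomial_mat_cong)
  have step: "\<eta> i = \<eta> ((i + p - 1) mod p)" if "i < p" for i
    using monomial_mat_eqD[OF eq p that] \<tau>[OF that] by (simp add: mult.commute)
  show ?thesis
    using i
  proof (induction i)
    case (Suc i)
    then show ?case
      using step[OF Suc.prems] by simp
  qed simp
qed

section \<open>The torsion subgroups of the torus and the group \<open>K\<close>\<close>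

definition Ttors_fun :: "nat \<Rightarrow> nat \<Rightarrow> (nat \<Rightarrow> complex) \<Rightarrow> bool" where
  "Ttors_fun p N \<xi> \<longleftrightarrow> (\<forall>q<p. cmod (\<xi> q) = 1) \<and> (\<Prod>q<p. \<xi> q) = 1 \<and> (\<forall>q<p. \<xi> q ^ N = 1)"

lemma Ttors_fun_nonzero: "Ttors_fun p N \<xi> \<Longrightarrow> q < p \<Longrightarrow> \<xi> q \<noteq> 0"
  unfolding Ttors_fun_def by force

lemma Ttors_fun_one: "Ttors_fun p N (\<lambda>_. 1)"
  by (simp add: Ttors_fun_def)

lemma Ttors_fun_dvd: "Ttors_fun p M \<xi> \<Longrightarrow> M dvd N \<Longrightarrow> Ttors_fun p N \<xi>"
  unfolding Ttors_fun_def by (auto elim!: dvdE simp: power_mult)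

lemma Ttors_fun_mult_shift:
  assumes "Ttors_fun p N \<xi>" "Ttors_fun p N \<eta>" "b \<le> p"
  shows "Ttors_fun p N (\<lambda>i. \<xi> i * \<eta> ((i + p - b) mod p))"
proof -
  have "(\<Prod>i<p. \<eta> ((i + p - b) mod p)) = (\<Prod>i<p. \<eta> ((i + (p - b)) mod p))"
    using assms(3) by (simp add: add_diff_assoc)
  also have "\<dots> = 1"
    using assms(2) prod_mod_shift[where f = \<eta> and a = "p - b"] by (simp add: Ttors_fun_def)
  finally have "(\<Prod>i<p. \<eta> ((i + p - b) mod p)) = 1" .
  then show ?thesis
    using assms by (auto simp: Ttors_fun_def prod.distrib norm_mult power_mult_distrib)
qed

lemma Ttors_fun_inverse_shift:
  assumes "Ttors_fun p N \<xi>"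
  shows "Ttors_fun p N (\<lambda>i. inverse (\<xi> ((i + b) mod p)))"
proof -
  have "(\<Prod>i<p. inverse (\<xi> ((i + b) mod p))) = inverse (\<Prod>i<p. \<xi> ((i + b) mod p))"
    using prod_inversef[of "\<lambda>i. \<xi> ((i + b) mod p)" "{..<p}"] by (simp add: o_def)
  also have "\<dots> = 1"
    using assms prod_mod_shift[where f = \<xi> and a = b] by (simp add: Ttors_fun_def)
  finally show ?thesis
    using assms by (auto simp: Ttors_fun_def norm_inverse power_inverse)
qed

lemma Ttors_eq:
  assumes "0 < p"
  shows "Ttors p N = {monomial_mat p \<xi> 0 | \<xi>. Ttors_fun p N \<xi>}"
  using monomial_mat_diag_pow_eq_one_iff[OF assms]
  by (auto simp: Ttors_def Ttorus_def Ttors_fun_def Smat_eq_monomial_mat)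

definition monomial_group :: "nat \<Rightarrow> nat \<Rightarrow> complex mat set" where
  "monomial_group p N = {monomial_mat p \<xi> b | \<xi> b. Ttors_fun p N \<xi> \<and> b < p}"

lemma monomial_groupI: "Ttors_fun p N \<xi> \<Longrightarrow> b < p \<Longrightarrow> monomial_mat p \<xi> b \<in> monomial_group p N"
  unfolding monomial_group_def by blast

lemma monomial_groupE:
  assumes "A \<in> monomial_group p N"
  obtains \<xi> b where "A = monomial_mat p \<xi> b" "Ttors_fun p N \<xi>" "b < p"
  using assms unfolding monomial_group_def by blast

lemma monomial_mat_mult_closed:
  assumes "Ttors_fun p N \<xi>" "Ttors_fun p N \<eta>" "b < p" "c < p"
  obtains \<zeta> where "Ttors_fun p N \<zeta>"
    "monomial_mat p \<xi> b * monomial_mat p \<eta> c = monomial_mat p \<zeta> ((b + c) mod p)"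
  using assms Ttors_fun_mult_shift[OF assms(1,2), of b] by (simp add: monomial_mat_mult)

lemma monomial_mat_inverse:
  assumes \<xi>: "Ttors_fun p N \<xi>" and b: "b < p"
  defines "B \<equiv> monomial_mat p (\<lambda>i. inverse (\<xi> ((i + b) mod p))) ((p - b) mod p)"
  shows "monomial_mat p \<xi> b * B = 1\<^sub>m p" "B * monomial_mat p \<xi> b = 1\<^sub>m p"
proof -
  have c: "(p - b) mod p < p"
    using b by simp
  have inv_shift: "(b + (p - b) mod p) mod p = 0" "((p - b) mod p + b) mod p = 0"
    using b by (cases "b = 0"; simp)+
  have "monomial_mat p \<xi> b * B
      = monomial_mat p (\<lambda>i. \<xi> i * inverse (\<xi> (((i + p - b) mod p + b) mod p)))
          ((b + (p - b) mod p) mod p)"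
    unfolding B_def using b c by (simp add: monomial_mat_mult)
  also have "\<dots> = 1\<^sub>m p"
    unfolding one_mat_eq_monomial_mat
  proof (rule monomial_mat_cong)
    fix i assume "i < p"
    then show "\<xi> i * inverse (\<xi> (((i + p - b) mod p + b) mod p)) = 1"
      using b mod_add_eq_iff[of i p "(i + p - b) mod p" b] Ttors_fun_nonzero[OF \<xi>] by simp
  qed (rule inv_shift)
  finally show "monomial_mat p \<xi> b * B = 1\<^sub>m p" .
  have "B * monomial_mat p \<xi> b
      = monomial_mat p (\<lambda>i. inverse (\<xi> ((i + b) mod p)) * \<xi> ((i + p - (p - b) mod p) mod p))
          (((p - b) mod p + b) mod p)"
    unfolding B_def using b c by (simp add: monomial_mat_mult)
  also have "\<dots> = 1\<^sub>m p"
    unfolding one_mat_eq_monomial_mat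
  proof (rule monomial_mat_cong)
    fix i assume i: "i < p"
    have "(i + p - (p - b) mod p) mod p = (i + b) mod p"
      using b by (cases "b = 0") (simp_all add: add.commute)
    then show "inverse (\<xi> ((i + b) mod p)) * \<xi> ((i + p - (p - b) mod p) mod p) = 1"
      using Ttors_fun_nonzero[OF \<xi>, of "(i + b) mod p"] i by simp
  qed (rule inv_shift)
  finally show "B * monomial_mat p \<xi> b = 1\<^sub>m p" .
qed

lemma monomial_group_subgrp:
  assumes "0 < p"
  shows "is_subgrp p (monomial_group p N)"
  unfolding is_subgrp_def
proof (intro conjI ballI)
  show "monomial_group p N \<subseteq> carrier_mat p p"
    by (auto simp: monomial_group_def)
  show "1\<^sub>m p \<in> monomial_group p N"
    unfolding one_mat_eq_monomial_mat by (intro monomial_groupI Ttors_fun_one assms)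
next
  fix A B assume "A \<in> monomial_group p N" "B \<in> monomial_group p N"
  then obtain \<xi> b \<eta> c where "A = monomial_mat p \<xi> b" "Ttors_fun p N \<xi>" "b < p"
    "B = monomial_mat p \<eta> c" "Ttors_fun p N \<eta>" "c < p"
    by (elim monomial_groupE)
  then show "A * B \<in> monomial_group p N"
    by (metis monomial_groupI monomial_mat_mult_closed mod_less_divisor assms)
next
  fix A assume "A \<in> monomial_group p N"
  then obtain \<xi> b where A: "A = monomial_mat p \<xi> b" "Ttors_fun p N \<xi>" "b < p"
    by (rule monomial_groupE)
  moreover have "(p - b) mod p < p"
    using assms by simp
  ultimately show "\<exists>B\<in>monomial_group p N. A * B = 1\<^sub>m p \<and> B * A = 1\<^sub>m p"
    using monomial_mat_inverse[OF A(2,3)] monomial_groupI[OF Ttors_fun_inverse_shift[OF A(2)]]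
    by blast
qed

lemma monomial_mat_pow:
  assumes "Ttors_fun p N \<xi>" "b < p"
  obtains \<eta> where "Ttors_fun p N \<eta>" "monomial_mat p \<xi> b ^\<^sub>m n = monomial_mat p \<eta> (n * b mod p)"
proof (induction n arbitrary: thesis)
  case 0
  show ?case
    by (rule 0[OF Ttors_fun_one]) (simp add: one_mat_eq_monomial_mat)
next
  case (Suc n)
  obtain \<eta> where "Ttors_fun p N \<eta>" "monomial_mat p \<xi> b ^\<^sub>m n = monomial_mat p \<eta> (n * b mod p)"
    using Suc.IH by blast
  moreover have "(n * b mod p + b) mod p = Suc n * b mod p"
    by (simp add: mod_add_right_eq add.commute)
  ultimately show ?case
    using Suc.prems monomial_mat_mult_closed[of p N \<eta> \<xi> "n * b mod p" b] assms by auto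
qed

lemma KQ_Ttors:
  assumes "1 < p"
  shows "KQ p (Ttors p N) = monomial_group p N"
proof -
  have X: "monomial_mat p \<xi> 0 * Xmat p ^\<^sub>m b = monomial_mat p \<xi> b" if "b < p" for \<xi> b
    using that assms by (simp add: Xmat_pow monomial_mat_mult cong: monomial_mat_cong)
  have "0 < p"
    using assms by simp
  have "{S * Xmat p ^\<^sub>m b | S b. S \<in> Ttors p N \<and> b < p} = monomial_group p N"
  proof (intro equalityI subsetI)
    fix A assume "A \<in> {S * Xmat p ^\<^sub>m b | S b. S \<in> Ttors p N \<and> b < p}"
    then obtain \<xi> b where "A = monomial_mat p \<xi> 0 * Xmat p ^\<^sub>m b" "Ttors_fun p N \<xi>" "b < p"
      unfolding Ttors_eq[OF \<open>0 < p\<close>] by blast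
    then show "A \<in> monomial_group p N"
      using X monomial_groupI by simp
  next
    fix A assume "A \<in> monomial_group p N"
    then obtain \<xi> b where "A = monomial_mat p \<xi> 0 * Xmat p ^\<^sub>m b" "Ttors_fun p N \<xi>" "b < p"
      using X by (metis monomial_groupE)
    then show "A \<in> {S * Xmat p ^\<^sub>m b | S b. S \<in> Ttors p N \<and> b < p}"
      unfolding Ttors_eq[OF \<open>0 < p\<close>] by blast
  qed
  then show ?thesis
    using assms by (simp add: KQ_def gen_grp_subgrp monomial_group_subgrp)
qed

lemma monomial_mat_diag_in_Ttors:
  "Ttors_fun p N \<eta> \<Longrightarrow> monomial_mat p \<eta> 0 ^\<^sub>m M = 1\<^sub>m p \<Longrightarrow> monomial_mat p \<eta> 0 \<in> Ttors p M"
  by (auto simp: Ttors_def Ttorus_def Ttors_fun_def Smat_eq_monomial_mat)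

lemma Ttors_subset_monomial_group:
  "0 < p \<Longrightarrow> M dvd N \<Longrightarrow> Ttors p M \<subseteq> monomial_group p N"
  by (auto simp: Ttors_eq intro: monomial_groupI Ttors_fun_dvd)

lemma Ttors_commute: "0 < p \<Longrightarrow> A \<in> Ttors p M \<Longrightarrow> B \<in> Ttors p M \<Longrightarrow> A * B = B * A"
  by (auto simp: Ttors_eq monomial_mat_diag_mult mult.commute)

lemma Ttors_subgrp:
  assumes p: "0 < p"
  shows "is_subgrp p (Ttors p M)"
  unfolding is_subgrp_def
proof (intro conjI ballI)
  show "Ttors p M \<subseteq> carrier_mat p p"
    by (auto simp: Ttors_eq[OF p])
  show "1\<^sub>m p \<in> Ttors p M"
    unfolding Ttors_eq[OF p] one_mat_eq_monomial_mat using Ttors_fun_one by blast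
next
  fix A B assume "A \<in> Ttors p M" "B \<in> Ttors p M"
  then obtain \<xi> \<eta> where "A = monomial_mat p \<xi> 0" "Ttors_fun p M \<xi>"
    and "B = monomial_mat p \<eta> 0" "Ttors_fun p M \<eta>"
    unfolding Ttors_eq[OF p] by blast
  then show "A * B \<in> Ttors p M"
    unfolding Ttors_eq[OF p] using p monomial_mat_mult_closed[of p M \<xi> \<eta> 0 0] by auto
next
  fix A assume "A \<in> Ttors p M"
  then obtain \<xi> where "A = monomial_mat p \<xi> 0" "Ttors_fun p M \<xi>"
    unfolding Ttors_eq[OF p] by blast
  then show "\<exists>B \<in> Ttors p M. A * B = 1\<^sub>m p \<and> B * A = 1\<^sub>m p"
    unfolding Ttors_eq[OF p]
    using p monomial_mat_inverse[of p M \<xi> 0] Ttors_fun_inverse_shift[of p M \<xi> 0] by auto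
qed

section \<open>Centre and maximal \<open>p\<close>-torsion abelian subgroups of \<open>K\<close>\<close>

locale odd_prime_torsion =
  fixes p N :: nat and \<omega> :: complex
  assumes prime: "prime p" and odd: "odd p" and dvd_N: "p dvd N"
    and omega: "\<omega> = cis (2 * pi / real p)"
begin

lemma p_ge_3: "3 \<le> p"
proof -
  have "p \<noteq> 0" "p \<noteq> 1"
    using prime by (metis not_prime_0, metis not_prime_1)
  moreover have "p \<noteq> 2"
    using odd by auto
  ultimately show ?thesis
    by simp
qed

lemma p_pos: "0 < p"
  using p_ge_3 by simp

lemma p_gt_1: "1 < p"
  using p_ge_3 by simp

lemma omega_pow_p: "\<omega> ^ p = 1"
  using p_pos by (simp add: omega DeMoivre)

lemma omega_pow_inj: "j < p \<Longrightarrow> k < p \<Longrightarrow> \<omega> ^ j = \<omega> ^ k \<Longrightarrow> j = k"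
  using bij_betw_roots_unity[OF p_pos] unfolding bij_betw_def inj_on_def
  by (simp add: omega DeMoivre mult_ac)

lemma root_of_unity_eq_omega_pow:
  assumes "z ^ p = 1"
  obtains j where "z = \<omega> ^ j"
proof -
  obtain k where "z = cis (2 * pi * real k / real p)"
    using bij_betw_roots_unity[OF p_pos] assms unfolding bij_betw_def by auto
  then show ?thesis
    using that[of k] by (simp add: omega DeMoivre mult_ac)
qed

lemma Ttors_fun_omega_pow:
  assumes "p dvd M"
  shows "Ttors_fun p M (\<lambda>_. \<omega> ^ j)"
proof -
  obtain k where "M = p * k"
    using assms by (rule dvdE)
  then have "(\<omega> ^ j) ^ M = ((\<omega> ^ p) ^ j) ^ k"
    by (simp add: power_mult[symmetric] ac_simps)
  moreover have "(\<Prod>q<p. \<omega> ^ j) = (\<omega> ^ p) ^ j"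
    by (simp add: power_mult[symmetric] mult.commute)
  moreover have "cmod \<omega> = 1"
    by (simp add: omega)
  ultimately show ?thesis
    by (simp add: Ttors_fun_def omega_pow_p norm_power)
qed

lemma scalar_pow: "(\<omega> \<cdot>\<^sub>m 1\<^sub>m p) ^\<^sub>m j = monomial_mat p (\<lambda>_. \<omega> ^ j) 0"
  using p_pos by (simp add: smult_one_mat_eq_monomial_mat monomial_mat_diag_pow)

definition scalars :: "complex mat set" where
  "scalars = {(\<omega> \<cdot>\<^sub>m 1\<^sub>m p) ^\<^sub>m j | j. True}"

lemma scalars_subset_Ttors: "p dvd M \<Longrightarrow> scalars \<subseteq> Ttors p M"
  using p_pos by (auto simp: scalars_def scalar_pow Ttors_eq Ttors_fun_omega_pow)

lemma scalars_subset_monomial_group: "scalars \<subseteq> monomial_group p N"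
  using scalars_subset_Ttors[OF dvd_N] Ttors_subset_monomial_group[OF p_pos dvd_refl] by (rule order.trans)

lemma scalars_commute: "Z \<in> scalars \<Longrightarrow> A \<in> carrier_mat p p \<Longrightarrow> Z * A = A * Z"
  unfolding scalars_def
  using pow_mat_commute[of "\<omega> \<cdot>\<^sub>m 1\<^sub>m p" p A] smult_one_mat_commute[of A p \<omega>] by auto

lemma commuting_pair_scalar:
  "A \<in> carrier_mat p p \<Longrightarrow> A ^\<^sub>m p = 1\<^sub>m p \<Longrightarrow> commuting_pair p (\<omega> \<cdot>\<^sub>m 1\<^sub>m p) A"
  by unfold_locales
    (simp_all add: p_pos smult_one_mat_commute scalar_pow omega_pow_p flip: one_mat_eq_monomial_mat)

lemma gen_grp_scalar: "gen_grp p {\<omega> \<cdot>\<^sub>m 1\<^sub>m p} = scalars"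
proof -
  have "gen_grp p {\<omega> \<cdot>\<^sub>m 1\<^sub>m p} = pair_powers (\<omega> \<cdot>\<^sub>m 1\<^sub>m p) (1\<^sub>m p)"
    using commuting_pair.gen_grp_pair[OF commuting_pair_scalar[of "1\<^sub>m p"]] gen_grp_insert_one
    by (simp add: one_pow_mat insert_commute)
  also have "\<dots> = scalars"
    by (simp add: pair_powers_def scalars_def one_pow_mat)
  finally show ?thesis .
qed

lemma const_diag_in_scalars:
  assumes "\<And>i. i < p \<Longrightarrow> \<eta> i = \<eta> 0" "\<eta> 0 ^ p = 1"
  shows "monomial_mat p \<eta> 0 \<in> scalars"
proof -
  obtain j where "\<eta> 0 = \<omega> ^ j"
    using root_of_unity_eq_omega_pow[OF assms(2)] .
  then have "monomial_mat p \<eta> 0 = (\<omega> \<cdot>\<^sub>m 1\<^sub>m p) ^\<^sub>m j"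
    unfolding scalar_pow using assms(1) by (auto intro: monomial_mat_cong)
  then show ?thesis
    unfolding scalars_def by blast
qed

lemma diag_commute_cycle_in_scalars:
  assumes \<tau>: "Ttors_fun p N \<tau>"
    and commute: "monomial_mat p \<eta> 0 * monomial_mat p \<tau> 1 = monomial_mat p \<tau> 1 * monomial_mat p \<eta> 0"
    and torsion: "monomial_mat p \<eta> 0 ^\<^sub>m p = 1\<^sub>m p"
  shows "monomial_mat p \<eta> 0 \<in> scalars"
proof (rule const_diag_in_scalars)
  show "\<eta> i = \<eta> 0" if "i < p" for i
    using monomial_mat_diag_commute_cycle[OF p_gt_1 _ commute that] Ttors_fun_nonzero[OF \<tau>] by blast
  show "\<eta> 0 ^ p = 1"
    using torsion p_pos by (simp add: monomial_mat_diag_pow_eq_one_iff)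
qed

lemma exists_Ttors_fun_separating_0:
  obtains \<delta> where "Ttors_fun p N \<delta>" "\<And>c. 0 < c \<Longrightarrow> c < p \<Longrightarrow> \<delta> c \<noteq> \<delta> 0"
proof -
  define \<delta> where "\<delta> i = (if i = 0 then \<omega> else 1) * (if i = 1 then \<omega> ^ (p - 1) else 1)" for i :: nat
  have "\<omega> * \<omega> ^ (p - 1) = 1"
    using omega_pow_p p_pos by (simp flip: power_Suc)
  then have "(\<Prod>i<p. \<delta> i) = 1"
    unfolding \<delta>_def prod.distrib using p_gt_1 by (simp add: prod.delta)
  moreover have "cmod (\<delta> i) = 1 \<and> \<delta> i ^ N = 1" for i
  proof -
    have w: "cmod (\<omega> ^ j) = 1 \<and> (\<omega> ^ j) ^ N = 1" for j
      using Ttors_fun_omega_pow[OF dvd_N, of j] p_pos unfolding Ttors_fun_def by blast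
    show ?thesis
      using w[of 1] w[of "p - 1"] by (auto simp: \<delta>_def)
  qed
  ultimately have "Ttors_fun p N \<delta>"
    by (simp add: Ttors_fun_def)
  \<comment> \<open>This is where \<open>p \<noteq> 2\<close> is needed.\<close>
  moreover have "\<omega> ^ 1 \<noteq> \<omega> ^ (p - 1)" "\<omega> ^ 1 \<noteq> \<omega> ^ 0"
    using omega_pow_inj[of 1 "p - 1"] omega_pow_inj[of 1 0] p_ge_3 by auto
  then have "\<delta> c \<noteq> \<delta> 0" if "0 < c" "c < p" for c
    using that by (simp add: \<delta>_def)
  ultimately show ?thesis
    using that by blast
qed

lemma center_monomial_group: "center_grp (monomial_group p N) = scalars"
proof
  show "scalars \<subseteq> center_grp (monomial_group p N)"
    using scalars_subset_monomial_group scalars_commute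
    by (auto simp: center_grp_def monomial_group_def)
next
  show "center_grp (monomial_group p N) \<subseteq> scalars"
  proof
    fix Z assume "Z \<in> center_grp (monomial_group p N)"
    then obtain \<eta> c where Z: "Z = monomial_mat p \<eta> c" "Ttors_fun p N \<eta>" "c < p"
      and central: "\<And>A. A \<in> monomial_group p N \<Longrightarrow> Z * A = A * Z"
      by (auto simp: center_grp_def elim: monomial_groupE)
    obtain \<delta> where \<delta>: "Ttors_fun p N \<delta>" "\<And>c. 0 < c \<Longrightarrow> c < p \<Longrightarrow> \<delta> c \<noteq> \<delta> 0"
      using exists_Ttors_fun_separating_0 by blast
    have "\<delta> c = \<delta> 0"
      using monomial_mat_commute_diag[where \<eta> = \<eta> and \<delta> = \<delta>, OF Z(3) Ttors_fun_nonzero[OF Z(2,3)]]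
        central[OF monomial_groupI[OF \<delta>(1) p_pos]] Z(1) by simp
    then have "c = 0"
      using \<delta>(2) Z(3) by blast
    have X: "monomial_mat p \<eta> 0 * monomial_mat p (\<lambda>_. 1) 1 = monomial_mat p (\<lambda>_. 1) 1 * monomial_mat p \<eta> 0"
      using central[OF monomial_groupI[OF Ttors_fun_one p_gt_1]] Z(1) \<open>c = 0\<close> by simp
    have const: "\<eta> i = \<eta> 0" if "i < p" for i
      using monomial_mat_diag_commute_cycle[OF p_gt_1 _ X that] by simp
    have "(\<Prod>i<p. \<eta> i) = (\<Prod>i<p. \<eta> 0)"
      by (rule prod.cong) (auto intro: const)
    then have "\<eta> 0 ^ p = 1"
      using Z(2) by (simp add: Ttors_fun_def)
    then show "Z \<in> scalars"
      using const_diag_in_scalars[where \<eta> = \<eta>, OF const] Z(1) \<open>c = 0\<close> by simp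
  qed
qed

lemma Ttors_ptors_abelian_sub: "ptors_abelian_sub p (monomial_group p N) (Ttors p p)"
  unfolding ptors_abelian_sub_def
  using Ttors_subgrp[OF p_pos] Ttors_subset_monomial_group[OF p_pos dvd_N] Ttors_commute[OF p_pos]
  by (auto simp: Ttors_def)

lemma max_ptors_diag_eq_Ttors:
  assumes max: "max_ptors_abelian_sub p (monomial_group p N) H"
    and diag: "\<And>\<eta> c. monomial_mat p \<eta> c \<in> H \<Longrightarrow> Ttors_fun p N \<eta> \<Longrightarrow> c < p \<Longrightarrow> c = 0"
  shows "H = Ttors p p"
proof -
  have "H \<subseteq> Ttors p p"
  proof
    fix A assume "A \<in> H"
    then have "A \<in> monomial_group p N"
      using max by (auto simp: max_ptors_abelian_sub_def ptors_abelian_sub_def)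
    then obtain \<eta> c where A: "A = monomial_mat p \<eta> c" "Ttors_fun p N \<eta>" "c < p"
      by (rule monomial_groupE)
    then have "c = 0"
      using diag \<open>A \<in> H\<close> by blast
    moreover have "A ^\<^sub>m p = 1\<^sub>m p"
      using max \<open>A \<in> H\<close> by (auto simp: max_ptors_abelian_sub_def ptors_abelian_sub_def)
    ultimately show "A \<in> Ttors p p"
      using A monomial_mat_diag_in_Ttors by simp
  qed
  then show ?thesis
    using max Ttors_ptors_abelian_sub unfolding max_ptors_abelian_sub_def by blast
qed

lemma monomial_mat_pow_cycle:
  assumes "Ttors_fun p N \<sigma>" "0 < c" "c < p"
  obtains k \<tau> where "Ttors_fun p N \<tau>" "monomial_mat p \<sigma> c ^\<^sub>m k = monomial_mat p \<tau> 1"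
proof -
  obtain k where "k * c mod p = 1"
    using exists_mod_inverse[OF prime assms(2,3)] ..
  then show ?thesis
    using monomial_mat_pow[OF assms(1,3), of k] that by metis
qed

lemma pair_powers_ptors_abelian_sub:
  assumes \<tau>: "Ttors_fun p N \<tau>" and torsion: "monomial_mat p \<tau> 1 ^\<^sub>m p = 1\<^sub>m p"
  shows "ptors_abelian_sub p (monomial_group p N) (pair_powers (\<omega> \<cdot>\<^sub>m 1\<^sub>m p) (monomial_mat p \<tau> 1))"
proof -
  interpret commuting_pair p "\<omega> \<cdot>\<^sub>m 1\<^sub>m p" "monomial_mat p \<tau> 1"
    using commuting_pair_scalar[OF _ torsion] by simp
  have "pair_powers (\<omega> \<cdot>\<^sub>m 1\<^sub>m p) (monomial_mat p \<tau> 1) \<subseteq> monomial_group p N"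
  proof
    fix A assume "A \<in> pair_powers (\<omega> \<cdot>\<^sub>m 1\<^sub>m p) (monomial_mat p \<tau> 1)"
    then obtain j k where A: "A = (\<omega> \<cdot>\<^sub>m 1\<^sub>m p) ^\<^sub>m j * monomial_mat p \<tau> 1 ^\<^sub>m k"
      unfolding pair_powers_def by blast
    have "(\<omega> \<cdot>\<^sub>m 1\<^sub>m p) ^\<^sub>m j \<in> monomial_group p N"
      using scalars_subset_monomial_group by (auto simp: scalars_def)
    moreover have "monomial_mat p \<tau> 1 ^\<^sub>m k \<in> monomial_group p N"
      using subgrp_pow_closed monomial_group_subgrp[OF p_pos] monomial_groupI[OF \<tau> p_gt_1] by blast
    ultimately show "A \<in> monomial_group p N"
      using monomial_group_subgrp[OF p_pos] unfolding A is_subgrp_def by blast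
  qed
  then show ?thesis
    unfolding ptors_abelian_sub_def
    using pair_powers_subgrp pair_powers_commute pair_powers_torsion by blast
qed

lemma ptors_abelian_sub_subset_pair_powers:
  assumes H: "ptors_abelian_sub p (monomial_group p N) H"
    and \<tau>: "Ttors_fun p N \<tau>" and Y: "monomial_mat p \<tau> 1 \<in> H"
  shows "H \<subseteq> pair_powers (\<omega> \<cdot>\<^sub>m 1\<^sub>m p) (monomial_mat p \<tau> 1)"
proof
  let ?Y = "monomial_mat p \<tau> 1"
  have Hs: "is_subgrp p H" and HK: "H \<subseteq> monomial_group p N"
    and commute: "\<And>A B. A \<in> H \<Longrightarrow> B \<in> H \<Longrightarrow> A * B = B * A"
    and torsion: "\<And>A. A \<in> H \<Longrightarrow> A ^\<^sub>m p = 1\<^sub>m p"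
    using H by (auto simp: ptors_abelian_sub_def)
  fix A assume "A \<in> H"
  then obtain \<eta> d where A: "A = monomial_mat p \<eta> d" "Ttors_fun p N \<eta>" "d < p"
    using HK by (blast elim: monomial_groupE)
  obtain \<rho> where \<rho>: "Ttors_fun p N \<rho>" "?Y ^\<^sub>m (p - d) = monomial_mat p \<rho> ((p - d) * 1 mod p)"
    using monomial_mat_pow[OF \<tau> p_gt_1] by metis
  have "(d + (p - d) mod p) mod p = 0"
    using A(3) by (cases "d = 0") simp_all
  then obtain \<zeta> where "Ttors_fun p N \<zeta>" and D: "A * ?Y ^\<^sub>m (p - d) = monomial_mat p \<zeta> 0"
    using monomial_mat_mult_closed[OF A(2) \<rho>(1) A(3), of "(p - d) mod p"] A(1) \<rho>(2) p_pos by auto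
  have D_in_H: "A * ?Y ^\<^sub>m (p - d) \<in> H"
    using Hs \<open>A \<in> H\<close> subgrp_pow_closed[OF Hs Y] unfolding is_subgrp_def by blast
  then have "monomial_mat p \<zeta> 0 \<in> scalars"
    using diag_commute_cycle_in_scalars[OF \<tau>] commute[OF _ Y] torsion unfolding D by metis
  then obtain j where j: "A * ?Y ^\<^sub>m (p - d) = (\<omega> \<cdot>\<^sub>m 1\<^sub>m p) ^\<^sub>m j"
    unfolding D scalars_def by blast
  have "?Y ^\<^sub>m (p - d) * ?Y ^\<^sub>m d = 1\<^sub>m p"
    using pow_mat_add[of ?Y p "p - d" d] torsion[OF Y] A(3) by simp
  then have "A = A * (?Y ^\<^sub>m (p - d) * ?Y ^\<^sub>m d)"
    using A(1) by simp
  also have "\<dots> = (\<omega> \<cdot>\<^sub>m 1\<^sub>m p) ^\<^sub>m j * ?Y ^\<^sub>m d"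
    unfolding j[symmetric] A(1) by (simp add: assoc_mult_mat[of _ p p _ p _ p])
  finally show "A \<in> pair_powers (\<omega> \<cdot>\<^sub>m 1\<^sub>m p) ?Y"
    unfolding pair_powers_def by blast
qed

lemma max_ptors_eq_pair_powers:
  assumes max: "max_ptors_abelian_sub p (monomial_group p N) H"
    and \<tau>: "Ttors_fun p N \<tau>" and Y: "monomial_mat p \<tau> 1 \<in> H"
  shows "H = pair_powers (\<omega> \<cdot>\<^sub>m 1\<^sub>m p) (monomial_mat p \<tau> 1)"
proof -
  have "monomial_mat p \<tau> 1 ^\<^sub>m p = 1\<^sub>m p"
    using max Y by (auto simp: max_ptors_abelian_sub_def ptors_abelian_sub_def)
  then show ?thesis
    using max ptors_abelian_sub_subset_pair_powers[OF _ \<tau> Y] pair_powers_ptors_abelian_sub[OF \<tau>]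
    unfolding max_ptors_abelian_sub_def by blast
qed

lemma max_ptors_contains_cycle:
  assumes max: "max_ptors_abelian_sub p (monomial_group p N) H" and "H \<noteq> Ttors p p"
  obtains \<tau> where "Ttors_fun p N \<tau>" "monomial_mat p \<tau> 1 \<in> H"
proof -
  obtain \<sigma> c where "monomial_mat p \<sigma> c \<in> H" "Ttors_fun p N \<sigma>" "c < p" "c \<noteq> 0"
    using max_ptors_diag_eq_Ttors[OF max] \<open>H \<noteq> Ttors p p\<close> by blast
  moreover obtain k \<tau> where "Ttors_fun p N \<tau>" "monomial_mat p \<sigma> c ^\<^sub>m k = monomial_mat p \<tau> 1"
    using monomial_mat_pow_cycle calculation by blast
  moreover have "is_subgrp p H"
    using max by (simp add: max_ptors_abelian_sub_def ptors_abelian_sub_def)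
  ultimately show ?thesis
    using that subgrp_pow_closed by metis
qed

lemma max_ptors_cases:
  assumes max: "max_ptors_abelian_sub p (monomial_group p N) H"
  shows "H = Ttors p p \<or> (\<exists>S \<in> Ttors p N. H = gen_grp p {\<omega> \<cdot>\<^sub>m 1\<^sub>m p, S * Xmat p})"
proof (cases "H = Ttors p p")
  case False
  then obtain \<tau> where \<tau>: "Ttors_fun p N \<tau>" and Y: "monomial_mat p \<tau> 1 \<in> H"
    using max_ptors_contains_cycle[OF max] by blast
  have "monomial_mat p \<tau> 1 ^\<^sub>m p = 1\<^sub>m p"
    using max Y by (auto simp: max_ptors_abelian_sub_def ptors_abelian_sub_def)
  then have "H = gen_grp p {\<omega> \<cdot>\<^sub>m 1\<^sub>m p, monomial_mat p \<tau> 1}"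
    using max_ptors_eq_pair_powers[OF max \<tau> Y] commuting_pair.gen_grp_pair[OF commuting_pair_scalar]
    by simp
  moreover have "monomial_mat p \<tau> 1 = monomial_mat p \<tau> 0 * Xmat p"
    using p_gt_1 by (simp add: Xmat_eq_monomial_mat monomial_mat_mult cong: monomial_mat_cong)
  moreover have "monomial_mat p \<tau> 0 \<in> Ttors p N"
    using \<tau> p_pos by (auto simp: Ttors_eq)
  ultimately show ?thesis
    by auto
qed simp

lemma scalars_subset_max_ptors:
  assumes max: "max_ptors_abelian_sub p (monomial_group p N) H"
  shows "scalars \<subseteq> H"
proof (cases "H = Ttors p p")
  case True
  then show ?thesis
    using scalars_subset_Ttors by simp
next
  case False
  then obtain \<tau> where "Ttors_fun p N \<tau>" "monomial_mat p \<tau> 1 \<in> H"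
    using max_ptors_contains_cycle[OF max] by blast
  then have "H = pair_powers (\<omega> \<cdot>\<^sub>m 1\<^sub>m p) (monomial_mat p \<tau> 1)"
    using max_ptors_eq_pair_powers[OF max] by blast
  moreover have "Z = Z * monomial_mat p \<tau> 1 ^\<^sub>m 0" if "Z \<in> scalars" for Z
    using that by (auto simp: scalars_def)
  ultimately show ?thesis
    unfolding scalars_def pair_powers_def by blast
qed

lemma max_ptors_inter:
  assumes max1: "max_ptors_abelian_sub p (monomial_group p N) H1"
    and max2: "max_ptors_abelian_sub p (monomial_group p N) H2" and "H1 \<noteq> H2"
  shows "H1 \<inter> H2 = scalars"
proof
  show "scalars \<subseteq> H1 \<inter> H2"
    using scalars_subset_max_ptors[OF max1] scalars_subset_max_ptors[OF max2] by blast
next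
  show "H1 \<inter> H2 \<subseteq> scalars"
  proof
    fix A assume A: "A \<in> H1 \<inter> H2"
    then have "A \<in> monomial_group p N"
      using max1 by (auto simp: max_ptors_abelian_sub_def ptors_abelian_sub_def)
    then obtain \<eta> c where A_eq: "A = monomial_mat p \<eta> c" "Ttors_fun p N \<eta>" "c < p"
      by (rule monomial_groupE)
    show "A \<in> scalars"
    proof (cases "c = 0")
      case False
      then obtain k \<tau> where \<tau>: "Ttors_fun p N \<tau>" and Y: "A ^\<^sub>m k = monomial_mat p \<tau> 1"
        using monomial_mat_pow_cycle[OF A_eq(2)] A_eq(1,3) by blast
      have "monomial_mat p \<tau> 1 \<in> H1" "monomial_mat p \<tau> 1 \<in> H2"
        using A max1 max2 subgrp_pow_closed unfolding Y[symmetric]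
        by (auto simp: max_ptors_abelian_sub_def ptors_abelian_sub_def)
      then have "H1 = H2"
        using max_ptors_eq_pair_powers[OF max1 \<tau>] max_ptors_eq_pair_powers[OF max2 \<tau>] by simp
      then show ?thesis
        using \<open>H1 \<noteq> H2\<close> by blast
    next
      case True
      obtain H where max: "max_ptors_abelian_sub p (monomial_group p N) H" and "A \<in> H" "H \<noteq> Ttors p p"
        using max1 max2 A \<open>H1 \<noteq> H2\<close> by blast
      then obtain \<tau> where \<tau>: "Ttors_fun p N \<tau>" and Y: "monomial_mat p \<tau> 1 \<in> H"
        using max_ptors_contains_cycle by blast
      show ?thesis
        using diag_commute_cycle_in_scalars[OF \<tau>] max \<open>A \<in> H\<close> Y A_eq(1) True
        by (auto simp: max_ptors_abelian_sub_def ptors_abelian_sub_def)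
    qed
  qed
qed

end

theorem corollary1:
  fixes p m :: nat and \<omega> :: complex and Q K :: "complex mat set"
  assumes "prime p" and "odd p" and "m \<ge> 1"
    and "\<omega> = cis (2 * pi / real p)"
    and "Q = Ttors p (p ^ m)" and "K = KQ p Q"
  shows "(\<forall>H. max_ptors_abelian_sub p K H \<longrightarrow>
            H = Ttors p p \<or> (\<exists>S\<in>Q. H = gen_grp p {\<omega> \<cdot>\<^sub>m 1\<^sub>m p, S * Xmat p}))
       \<and> center_grp K = gen_grp p {\<omega> \<cdot>\<^sub>m 1\<^sub>m p}
       \<and> (\<forall>H1 H2. max_ptors_abelian_sub p K H1 \<and> max_ptors_abelian_sub p K H2 \<and> H1 \<noteq> H2
            \<longrightarrow> H1 \<inter> H2 = center_grp K)"
proof -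
  interpret odd_prime_torsion p "p ^ m" \<omega>
    using assms(1-4) by unfold_locales (simp_all add: dvd_power)
  have K: "K = monomial_group p (p ^ m)"
    using assms(5,6) KQ_Ttors[OF p_gt_1] by simp
  show ?thesis
    unfolding K center_monomial_group gen_grp_scalar
    using max_ptors_cases max_ptors_inter assms(5) by blast
qed

end
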